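(* Let $Q$ be a probability measure on $\mathcal{X}$, $f_0\in L_2(Q)$, $\sigma>0$, and let $f_1,\ldots,f_M$ satisfy (A3): $\sup_j\sup_{x}|f_j(x)|\le\kappa<\infty$. Suppose $f^\ast=\sum_{j=1}^M\lambda^\ast_jf_j$ with $\lambda^\ast\in\Lambda$ satisfies $E_Q[(f-f^\ast)(f^\ast-f_0)]=0$ for every $f\in\mathcal{F}^{\Lambda}$. Then there exist $C>0$ and, for every $n$ and every $\lambda_2\in\Lambda$, a measurable function $\phi_n$ of $(X^n,Y^n)$ with values in $[0,1]$ such that $$P^{(n)}_{0,Q}\phi_n\le\exp\{-Cn\,d_\Sigma^2(\lambda_2,\lambda^\ast)\},\qquad \sup_{\lambda\in\Lambda:\ d_\Sigma(\lambda,\lambda_2)<\frac14 d_\Sigma(\lambda^\ast,\lambda_2)}P^{(n)}_{\lambda,Q}(1-\phi_n)\le\exp\{-Cn\,d_\Sigma^2(\lambda_2,\lambda^\ast)\}.$$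
   Context: $\Lambda=\{\lambda\in\mathbb{R}^M:\lambda_j\ge0,\sum_j\lambda_j=1\}$, $\mathcal{F}^{\Lambda}=\{\sum_j\lambda_jf_j:\lambda\in\Lambda\}$. $\Sigma=(E_Q[f_i(X)f_j(X)])_{i,j}$ with $X\sim Q$ and $d_\Sigma(\lambda,\lambda')=\|\Sigma^{1/2}(\lambda-\lambda')\|_2=\|\sum_j(\lambda_j-\lambda'_j)f_j\|_{L_2(Q)}$. $P_{\lambda,Q}$ is the law of $(X,Y)$ with $X\sim Q$ and $Y\mid X\sim N(\sum_j\lambda_jf_j(X),\sigma^2)$; $P_{0,Q}$ is the law with $X\sim Q$, $Y\mid X\sim N(f_0(X),\sigma^2)$; superscript $(n)$ denotes the $n$-fold product, and $(X^n,Y^n)$ are $n$ i.i.d. copies of $(X,Y)$. *)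

theory Defs
  imports "HOL-Probability.Probability"
begin

definition Lsimplex :: "nat \<Rightarrow> (nat \<Rightarrow> real) set" where
  "Lsimplex M = {l. (\<forall>j<M. 0 \<le> l j) \<and> (\<Sum>j<M. l j) = 1}"

definition comb :: "nat \<Rightarrow> (nat \<Rightarrow> 'a \<Rightarrow> real) \<Rightarrow> (nat \<Rightarrow> real) \<Rightarrow> 'a \<Rightarrow> real" where
  "comb M f l x = (\<Sum>j<M. l j * f j x)"

definition dSigma :: "'a measure \<Rightarrow> nat \<Rightarrow> (nat \<Rightarrow> 'a \<Rightarrow> real) \<Rightarrow> (nat \<Rightarrow> real) \<Rightarrow> (nat \<Rightarrow> real) \<Rightarrow> real" where
  "dSigma Q M f l l' = sqrt (\<integral>x. (\<Sum>j<M. (l j - l' j) * f j x)\<^sup>2 \<partial>Q)"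

(* law of (X,Y): X ~ Q, Y | X ~ N(g(X), sigma^2) *)
definition regr_law :: "'a measure \<Rightarrow> ('a \<Rightarrow> real) \<Rightarrow> real \<Rightarrow> ('a \<times> real) measure" where
  "regr_law Q g \<sigma> = density (Q \<Otimes>\<^sub>M lborel) (\<lambda>(x, y). ennreal (normal_density (g x) \<sigma> y))"

definition nfold :: "nat \<Rightarrow> 'b measure \<Rightarrow> (nat \<Rightarrow> 'b) measure" where
  "nfold n P = PiM {..<n} (\<lambda>_. P)"

end

theory Submission
  imports Defs
begin

text \<open>The test thresholds a median of means of the statistic
  \<open>W(x, y) = (f\<^sub>\<lambda>\<^sub>2(x) - f\<^sup>*(x)) (y - f\<^sup>*(x))\<close>. Under \<open>P\<^sub>0\<close> its mean is \<open>0\<close> by the orthogonality of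
  \<open>f\<^sup>* - f\<^sub>0\<close> to the simplex; under \<open>P\<^sub>\<lambda>\<close> with \<open>\<lambda>\<close> close to \<open>\<lambda>\<^sub>2\<close> its mean is at least \<open>3 d\<^sup>2 / 4\<close>,
  where \<open>d = d\<^sub>\<Sigma>(\<lambda>\<^sub>2, \<lambda>\<^sup>*)\<close>. In both cases its second moment is \<open>O(d\<^sup>2)\<close>; under \<open>P\<^sub>0\<close> this needs
  that on the finite-dimensional span of the \<open>f\<^sub>j\<close> the norm of \<open>L\<^sub>2((f\<^sub>0 - f\<^sup>*)\<^sup>2 Q)\<close> is dominated by
  that of \<open>L\<^sub>2(Q)\<close>. Splitting the sample into blocks of size of order \<open>1/d\<^sup>2\<close>, Chebyshev's inequality
  makes each block mean err with probability at most \<open>1/4\<close>, and Hoeffding's inequality for the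
  independent blocks bounds both error probabilities by \<open>exp(-C n d\<^sup>2)\<close>.\<close>

section \<open>Independent coordinates and the median of means\<close>

lemma indep_vars_PiM_components:
  assumes "prob_space P"
  shows "prob_space.indep_vars (PiM I (\<lambda>_. P)) (\<lambda>_. P) (\<lambda>i z. z i) I"
proof -
  interpret N: prob_space "PiM I (\<lambda>_. P)" using assms by (intro prob_space_PiM) auto
  show ?thesis
  proof (cases "I = {}")
    case True
    then show ?thesis unfolding N.indep_vars_def N.indep_sets_def by auto
  next
    case False
    have "distr (PiM I (\<lambda>_. P)) (PiM I (\<lambda>_. P)) (\<lambda>x. \<lambda>i\<in>I. x i) = distr (PiM I (\<lambda>_. P)) (PiM I (\<lambda>_. P)) (\<lambda>x. x)"
      by (intro distr_cong) (auto simp: space_PiM PiE_def extensional_def restrict_def)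
    also have "\<dots> = PiM I (\<lambda>i. distr (PiM I (\<lambda>_. P)) P (\<lambda>x. x i))"
      by (simp, intro PiM_cong refl distr_PiM_component[symmetric]) (use assms in auto)
    finally show ?thesis
      by (subst N.indep_vars_iff_distr_eq_PiM'[OF False]) (auto intro!: measurable_component_singleton)
  qed
qed

lemma
  assumes "prob_space P" and "i \<in> I"
  shows integral_PiM_component: "h \<in> borel_measurable P \<Longrightarrow>
      (\<integral>z. h (z i) \<partial>PiM I (\<lambda>_. P)) = (\<integral>x. h x \<partial>P)"
    and integrable_PiM_component: "integrable P (h :: _ \<Rightarrow> real) \<Longrightarrow>
      integrable (PiM I (\<lambda>_. P)) (\<lambda>z. h (z i))"
proof -
  have distr: "distr (PiM I (\<lambda>_. P)) P (\<lambda>z. z i) = P"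
    using distr_PiM_component[of I "\<lambda>_. P" i] assms by auto
  have meas: "(\<lambda>z. z i) \<in> measurable (PiM I (\<lambda>_. P)) P"
    using assms(2) by (rule measurable_component_singleton)
  show "h \<in> borel_measurable P \<Longrightarrow> (\<integral>z. h (z i) \<partial>PiM I (\<lambda>_. P)) = (\<integral>x. h x \<partial>P)"
    using integral_distr[OF meas, of h] by (simp add: distr)
  show "integrable P h \<Longrightarrow> integrable (PiM I (\<lambda>_. P)) (\<lambda>z. h (z i))"
    using integrable_distr_eq[OF meas, of h] by (simp add: distr)
qed

lemma integral_PiM_component_products:
  fixes V :: "'b \<Rightarrow> real"
  assumes P: "prob_space P" and V: "V \<in> borel_measurable P" "integrable P (\<lambda>x. (V x)\<^sup>2)"
    and centered: "(\<integral>x. V x \<partial>P) = 0" and ij: "i \<in> I" "j \<in> I"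
  shows "integrable (PiM I (\<lambda>_. P)) (\<lambda>z. V (z i) * V (z j))"
    and "(\<integral>z. V (z i) * V (z j) \<partial>PiM I (\<lambda>_. P)) = (if i = j then \<integral>x. (V x)\<^sup>2 \<partial>P else 0)"
proof -
  interpret N: prob_space "PiM I (\<lambda>_. P)" using P by (intro prob_space_PiM) auto
  interpret P: prob_space P by (rule P)
  have V1: "integrable P V" using V P.square_integrable_imp_integrable by blast
  show "integrable (PiM I (\<lambda>_. P)) (\<lambda>z. V (z i) * V (z j))"
  proof (rule Bochner_Integration.integrable_bound)
    show "integrable (PiM I (\<lambda>_. P)) (\<lambda>z. (V (z i))\<^sup>2 + (V (z j))\<^sup>2)"
      using integrable_PiM_component[OF P ij(1) V(2)] integrable_PiM_component[OF P ij(2) V(2)]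
      by (rule Bochner_Integration.integrable_add)
    show "(\<lambda>z. V (z i) * V (z j)) \<in> borel_measurable (PiM I (\<lambda>_. P))"
      using ij V(1) by measurable
    show "AE z in PiM I (\<lambda>_. P). norm (V (z i) * V (z j)) \<le> norm ((V (z i))\<^sup>2 + (V (z j))\<^sup>2)"
    proof (intro AE_I2)
      fix z
      have "2 * (\<bar>V (z i)\<bar> * \<bar>V (z j)\<bar>) \<le> \<bar>V (z i)\<bar>\<^sup>2 + \<bar>V (z j)\<bar>\<^sup>2"
        using sum_squares_bound[of "\<bar>V (z i)\<bar>" "\<bar>V (z j)\<bar>"] by simp
      then show "norm (V (z i) * V (z j)) \<le> norm ((V (z i))\<^sup>2 + (V (z j))\<^sup>2)"
        by (simp add: abs_mult) (smt (verit) mult_nonneg_nonneg abs_ge_zero)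
    qed
  qed
  show "(\<integral>z. V (z i) * V (z j) \<partial>PiM I (\<lambda>_. P)) = (if i = j then \<integral>x. (V x)\<^sup>2 \<partial>P else 0)"
  proof (cases "i = j")
    case True
    then show ?thesis
      using integral_PiM_component[OF P ij(1), of "\<lambda>x. (V x)\<^sup>2"] V by (simp add: power2_eq_square)
  next
    case False
    have "N.indep_var (PiM {i} (\<lambda>_. P)) (\<lambda>z. restrict z {i}) (PiM {j} (\<lambda>_. P)) (\<lambda>z. restrict z {j})"
      using N.indep_var_restrict[OF indep_vars_PiM_components[OF P], of "{i}" "{j}"] ij False by auto
    then have "N.indep_var borel ((\<lambda>r. V (r i)) \<circ> (\<lambda>z. restrict z {i})) borel ((\<lambda>r. V (r j)) \<circ> (\<lambda>z. restrict z {j}))"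
      by (rule N.indep_var_compose) (use V(1) in measurable)
    then have "N.indep_var borel (\<lambda>z. V (z i)) borel (\<lambda>z. V (z j))"
      by (simp add: comp_def)
    then have "(\<integral>z. V (z i) * V (z j) \<partial>PiM I (\<lambda>_. P))
        = (\<integral>z. V (z i) \<partial>PiM I (\<lambda>_. P)) * (\<integral>z. V (z j) \<partial>PiM I (\<lambda>_. P))"
      using integrable_PiM_component[OF P ij(1) V1] integrable_PiM_component[OF P ij(2) V1]
      by (intro N.indep_var_lebesgue_integral)
    also have "\<dots> = 0" using integral_PiM_component[OF P ij(1) V(1)] centered by simp
    finally show ?thesis using False by simp
  qed
qed

lemma prob_sample_mean_deviation_le:
  fixes W :: "'b \<Rightarrow> real" and t :: real
  assumes P: "prob_space P" and W: "W \<in> borel_measurable P" "integrable P (\<lambda>x. (W x)\<^sup>2)"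
    and K: "finite K" "K \<subseteq> I" "K \<noteq> {}" and t: "t > 0"
  defines "\<mu> \<equiv> \<integral>x. W x \<partial>P"
  shows "measure (PiM I (\<lambda>_. P)) {z \<in> space (PiM I (\<lambda>_. P)). t \<le> \<bar>(\<Sum>i\<in>K. W (z i)) / card K - \<mu>\<bar>}
     \<le> (\<integral>x. (W x - \<mu>)\<^sup>2 \<partial>P) / (card K * t\<^sup>2)"
proof -
  interpret N: prob_space "PiM I (\<lambda>_. P)" using P by (intro prob_space_PiM) auto
  interpret P: prob_space P by (rule P)
  define V where "V x = W x - \<mu>" for x
  define S where "S z = (\<Sum>i\<in>K. V (z i))" for z
  have W1: "integrable P W" using W P.square_integrable_imp_integrable by blast
  have "V \<in> borel_measurable P"
    unfolding V_def[abs_def] using W(1) by measurable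
  moreover have "integrable P (\<lambda>x. (V x)\<^sup>2)" "(\<integral>x. V x \<partial>P) = 0"
    using W W1 by (auto simp: V_def \<mu>_def power2_diff P.prob_space)
  ultimately have V: "V \<in> borel_measurable P" "integrable P (\<lambda>x. (V x)\<^sup>2)" "(\<integral>x. V x \<partial>P) = 0"
    by auto
  have S_meas: "S \<in> borel_measurable (PiM I (\<lambda>_. P))"
    unfolding S_def using K(2) V(1)
    by (intro borel_measurable_sum measurable_compose[OF measurable_component_singleton]) auto
  have S_sq: "(S z)\<^sup>2 = (\<Sum>i\<in>K. \<Sum>j\<in>K. V (z i) * V (z j))" for z
    by (simp add: S_def power2_eq_square sum_product)
  have products: "integrable (PiM I (\<lambda>_. P)) (\<lambda>z. V (z i) * V (z j))"
      "(\<integral>z. V (z i) * V (z j) \<partial>PiM I (\<lambda>_. P)) = (if i = j then \<integral>x. (V x)\<^sup>2 \<partial>P else 0)"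
    if "i \<in> K" "j \<in> K" for i j
    using integral_PiM_component_products[OF P V, of i I j] that K(2) by blast+
  have S2: "integrable (PiM I (\<lambda>_. P)) (\<lambda>z. (S z)\<^sup>2)"
    unfolding S_sq using products(1) by auto
  have ES: "N.expectation S = 0"
  proof -
    have "integrable P V" using V P.square_integrable_imp_integrable by blast
    then have "integrable (PiM I (\<lambda>_. P)) (\<lambda>z. V (z i))"
      and "(\<integral>z. V (z i) \<partial>PiM I (\<lambda>_. P)) = 0" if "i \<in> K" for i
      using that K(2) V integral_PiM_component[OF P, of i I V] integrable_PiM_component[OF P, of i I V]
      by auto
    then show ?thesis
      unfolding S_def by (subst Bochner_Integration.integral_sum) auto
  qed
  have "N.variance S = N.expectation (\<lambda>z. (S z)\<^sup>2)"
    using ES by simp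
  also have "\<dots> = (\<Sum>i\<in>K. \<Sum>j\<in>K. \<integral>z. V (z i) * V (z j) \<partial>PiM I (\<lambda>_. P))"
    unfolding S_sq using products(1)
    by (simp add: Bochner_Integration.integral_sum)
  also have "\<dots> = card K * (\<integral>x. (V x)\<^sup>2 \<partial>P)"
    using products(2) K(1) by simp
  finally have VS: "N.variance S = card K * (\<integral>x. (V x)\<^sup>2 \<partial>P)" .
  have card: "real (card K) > 0" using K by auto
  have "(\<Sum>i\<in>K. W (z i)) / card K - \<mu> = S z / card K" for z
    using card by (simp add: S_def V_def sum_subtractf field_simps)
  then have "{z \<in> space (PiM I (\<lambda>_. P)). t \<le> \<bar>(\<Sum>i\<in>K. W (z i)) / card K - \<mu>\<bar>}
      = {z \<in> space (PiM I (\<lambda>_. P)). card K * t \<le> \<bar>S z - N.expectation S\<bar>}"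
    using card by (auto simp: ES pos_le_divide_eq mult.commute)
  also have "measure (PiM I (\<lambda>_. P)) \<dots> \<le> N.variance S / (card K * t)\<^sup>2"
    using N.Chebyshev_inequality[OF S_meas S2] card t by simp
  also have "\<dots> = (\<integral>x. (W x - \<mu>)\<^sup>2 \<partial>P) / (card K * t\<^sup>2)"
    unfolding VS V_def using card by (simp add: power2_eq_square field_simps)
  finally show ?thesis .
qed

lemma (in prob_space) variance_le_second_moment:
  fixes X :: "'a \<Rightarrow> real"
  assumes "random_variable borel X" "integrable M (\<lambda>x. (X x)\<^sup>2)"
  shows "variance X \<le> expectation (\<lambda>x. (X x)\<^sup>2)"
  using variance_eq[OF square_integrable_imp_integrable[OF assms] assms(2)]
    zero_le_power2[of "expectation X"] by linarith

definition block_mean :: "nat \<Rightarrow> ('b \<Rightarrow> real) \<Rightarrow> (nat \<Rightarrow> 'b) \<Rightarrow> nat \<Rightarrow> real" where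
  "block_mean m W z b = (\<Sum>i\<in>{b*m..<b*m+m}. W (z i)) / m"

lemma block_subset:
  fixes b k m n :: nat
  assumes "b < k" "k * m \<le> n"
  shows "{b*m..<b*m+m} \<subseteq> {..<n}"
proof -
  have "b * m + m \<le> k * m" using mult_le_mono1[of "Suc b" k m] assms(1) by simp
  then show ?thesis using assms(2) by auto
qed

lemma measurable_block_mean:
  assumes "b < k" "k * m \<le> n" "W \<in> borel_measurable P"
  shows "(\<lambda>z. block_mean m W z b) \<in> borel_measurable (PiM {..<n} (\<lambda>_. P))"
proof -
  have "(\<lambda>z. W (z i)) \<in> borel_measurable (PiM {..<n} (\<lambda>_. P))" if "i \<in> {b*m..<b*m+m}" for i
    using measurable_compose[OF measurable_component_singleton[of i "{..<n}" "\<lambda>_. P"] assms(3)]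
      block_subset[OF assms(1,2)] that by auto
  then show ?thesis unfolding block_mean_def by measurable
qed

lemma integral_if_one_zero:
  assumes "finite_measure N" "{z \<in> space N. c z} \<in> sets N"
  shows "(\<integral>z. (if c z then 1 else 0 :: real) \<partial>N) = measure N {z \<in> space N. c z}"
proof -
  have "(\<integral>z. (if c z then 1 else 0 :: real) \<partial>N) = (\<integral>z. indicator {z \<in> space N. c z} z \<partial>N)"
    by (intro Bochner_Integration.integral_cong) (auto simp: indicator_def)
  then show ?thesis
    using assms by (simp add: finite_measure.emeasure_eq_measure)
qed

lemma indep_vars_block_functions:
  fixes k m n :: nat
  assumes P: "prob_space P" and blocks: "k * m \<le> n"
    and Y: "\<And>b. b < k \<Longrightarrow> Y b \<in> borel_measurable (PiM {b*m..<b*m+m} (\<lambda>_. P))"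
  shows "prob_space.indep_vars (PiM {..<n} (\<lambda>_. P)) (\<lambda>_. borel)
    (\<lambda>b z. Y b (restrict z {b*m..<b*m+m})) {..<k}"
proof -
  interpret N: prob_space "PiM {..<n} (\<lambda>_. P)" using P by (intro prob_space_PiM) auto
  have "disjoint_family_on (\<lambda>b. {b*m..<b*m+m}) {..<k}"
  proof (unfold disjoint_family_on_def, intro ballI impI)
    fix a b :: nat assume "a \<noteq> b"
    then have "a * m + m \<le> b * m \<or> b * m + m \<le> a * m"
      by (metis Suc_leI mult_Suc mult_le_mono1 add.commute nat_neq_iff)
    then show "{a*m..<a*m+m} \<inter> {b*m..<b*m+m} = {}" by auto
  qed
  then have "N.indep_vars (\<lambda>b. PiM {b*m..<b*m+m} (\<lambda>_. P)) (\<lambda>b z. restrict z {b*m..<b*m+m}) {..<k}"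
    by (intro N.indep_vars_restrict[OF indep_vars_PiM_components[OF P]])
      (use block_subset[OF _ blocks] in auto)
  then show ?thesis
    by (rule N.indep_vars_compose2) (use Y in auto)
qed

lemma prob_half_block_means_deviate_le:
  fixes W :: "'b \<Rightarrow> real" and t :: real
  assumes P: "prob_space P" and W[measurable]: "W \<in> borel_measurable P" "integrable P (\<lambda>x. (W x)\<^sup>2)"
    and m: "m > 0" and t: "t > 0" and blocks: "k * m \<le> n"
    and var: "(\<integral>x. (W x - (\<integral>x. W x \<partial>P))\<^sup>2 \<partial>P) \<le> m * t\<^sup>2 / 4"
  defines "N \<equiv> PiM {..<n} (\<lambda>_. P)"
  shows "measure N {z \<in> space N. k / 2 \<le> (\<Sum>b<k. if t \<le> \<bar>block_mean m W z b - (\<integral>x. W x \<partial>P)\<bar> then 1 else 0)}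
    \<le> exp (- real k / 8)"
proof (cases "k = 0")
  case True
  interpret N: prob_space N unfolding N_def using P by (intro prob_space_PiM) auto
  show ?thesis using True by simp
next
  case False
  interpret N: prob_space N unfolding N_def using P by (intro prob_space_PiM) auto
  define \<mu> where "\<mu> = (\<integral>x. W x \<partial>P)"
  define X where "X b z = (if t \<le> \<bar>block_mean m W z b - \<mu>\<bar> then 1 else (0::real))" for b z
  have "N.indep_vars (\<lambda>_. borel) (\<lambda>b z. X b (restrict z {b*m..<b*m+m})) {..<k}"
    unfolding N_def by (rule indep_vars_block_functions[OF P blocks]) (unfold X_def block_mean_def, measurable)
  then have indep: "N.indep_vars (\<lambda>_. borel) X {..<k}"
    by (rule N.indep_vars_cong[THEN iffD1, OF refl _ refl, rotated])
      (auto simp: X_def block_mean_def fun_eq_iff)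
  interpret H: Hoeffding_ineq N "{..<k}" X "\<lambda>_. 0" "\<lambda>_. 1" "\<Sum>b<k. N.expectation (X b)"
    by unfold_locales (auto simp: indep X_def)
  have "N.expectation (X b) \<le> 1/4" if "b < k" for b
  proof -
    have [measurable]: "(\<lambda>z. block_mean m W z b) \<in> borel_measurable N"
      using measurable_block_mean[OF that blocks W(1)] by (simp add: N_def)
    then have "N.expectation (X b) = measure N {z \<in> space N. t \<le> \<bar>block_mean m W z b - \<mu>\<bar>}"
      unfolding X_def by (intro integral_if_one_zero N.finite_measure_axioms) measurable
    also have "\<dots> \<le> (\<integral>x. (W x - \<mu>)\<^sup>2 \<partial>P) / (m * t\<^sup>2)"
      using prob_sample_mean_deviation_le[OF P W, of "{b*m..<b*m+m}" "{..<n}" t] block_subset[OF that blocks] m t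
      by (simp add: N_def block_mean_def \<mu>_def)
    also have "\<dots> \<le> 1/4"
      using var m t by (simp add: \<mu>_def divide_le_eq)
    finally show ?thesis .
  qed
  then have "(\<Sum>b<k. N.expectation (X b)) + k / 4 \<le> k / 2"
    using sum_mono[of "{..<k}" "\<lambda>b. N.expectation (X b)" "\<lambda>_. 1/4"] by simp
  then have "measure N {z \<in> space N. k / 2 \<le> (\<Sum>b<k. X b z)}
      \<le> measure N {z \<in> space N. (\<Sum>b<k. N.expectation (X b)) + k / 4 \<le> (\<Sum>b<k. X b z)}"
    by (intro N.finite_measure_mono) auto
  also have "\<dots> \<le> exp (-2 * (k / 4)\<^sup>2 / (\<Sum>b<k. (1 - 0)\<^sup>2))"
    by (rule H.Hoeffding_ineq_ge) (use False in auto)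
  also have "\<dots> = exp (- real k / 8)"
    using False by (simp add: power2_eq_square field_simps)
  finally show ?thesis by (simp add: X_def \<mu>_def)
qed

definition mom_test :: "nat \<Rightarrow> nat \<Rightarrow> real \<Rightarrow> ('b \<Rightarrow> real) \<Rightarrow> (nat \<Rightarrow> 'b) \<Rightarrow> real" where
  "mom_test k m \<tau> W z =
     (if k / 2 \<le> (\<Sum>b<k. if \<tau> < block_mean m W z b then 1 else 0 :: real) then 1 else 0)"

lemma measurable_mom_test:
  assumes "k * m \<le> n" "W \<in> borel_measurable P"
  shows "mom_test k m \<tau> W \<in> borel_measurable (PiM {..<n} (\<lambda>_. P))"
proof -
  have [measurable]: "(\<lambda>z. block_mean m W z b) \<in> borel_measurable (PiM {..<n} (\<lambda>_. P))" if "b < k" for b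
    using measurable_block_mean[OF that assms] .
  show ?thesis unfolding mom_test_def[abs_def] by measurable
qed

context
  fixes P :: "'b measure" and W :: "'b \<Rightarrow> real" and k m n :: nat and t \<tau> :: real
  assumes P: "prob_space P" and W[measurable]: "W \<in> borel_measurable P" "integrable P (\<lambda>x. (W x)\<^sup>2)"
    and m: "m > 0" and t: "t > 0" and blocks: "k * m \<le> n"
    and var: "(\<integral>x. (W x - (\<integral>x. W x \<partial>P))\<^sup>2 \<partial>P) \<le> m * t\<^sup>2 / 4"
begin

interpretation N: prob_space "PiM {..<n} (\<lambda>_. P)"
  using P by (intro prob_space_PiM) auto

declare measurable_block_mean[OF _ blocks W(1), measurable]

lemma integral_mom_test_le:
  assumes "(\<integral>x. W x \<partial>P) + t \<le> \<tau>"
  shows "(\<integral>z. mom_test k m \<tau> W z \<partial>PiM {..<n} (\<lambda>_. P)) \<le> exp (- real k / 8)"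
proof -
  let ?N = "PiM {..<n} (\<lambda>_. P)"
  have "(\<integral>z. mom_test k m \<tau> W z \<partial>?N)
      = measure ?N {z \<in> space ?N. k / 2 \<le> (\<Sum>b<k. if \<tau> < block_mean m W z b then 1 else 0 :: real)}"
    unfolding mom_test_def by (intro integral_if_one_zero) measurable
  also have "\<dots> \<le> measure ?N {z \<in> space ?N.
      k / 2 \<le> (\<Sum>b<k. if t \<le> \<bar>block_mean m W z b - (\<integral>x. W x \<partial>P)\<bar> then 1 else 0 :: real)}"
  proof (rule N.finite_measure_mono[OF subsetI])
    fix z assume "z \<in> {z \<in> space ?N. k / 2 \<le> (\<Sum>b<k. if \<tau> < block_mean m W z b then 1 else 0 :: real)}"
    moreover have "(\<Sum>b<k. if \<tau> < block_mean m W z b then 1 else 0 :: real)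
        \<le> (\<Sum>b<k. if t \<le> \<bar>block_mean m W z b - (\<integral>x. W x \<partial>P)\<bar> then 1 else 0)"
      using assms by (intro sum_mono) auto
    ultimately show "z \<in> {z \<in> space ?N.
        k / 2 \<le> (\<Sum>b<k. if t \<le> \<bar>block_mean m W z b - (\<integral>x. W x \<partial>P)\<bar> then 1 else 0 :: real)}"
      by auto
  qed measurable
  also have "\<dots> \<le> exp (- real k / 8)"
    by (rule prob_half_block_means_deviate_le[OF P W m t blocks var])
  finally show ?thesis .
qed

lemma integral_one_minus_mom_test_le:
  assumes "\<tau> + t \<le> (\<integral>x. W x \<partial>P)"
  shows "(\<integral>z. 1 - mom_test k m \<tau> W z \<partial>PiM {..<n} (\<lambda>_. P)) \<le> exp (- real k / 8)"
proof -
  let ?N = "PiM {..<n} (\<lambda>_. P)"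
  have "(\<integral>z. 1 - mom_test k m \<tau> W z \<partial>?N)
      = measure ?N {z \<in> space ?N. \<not> k / 2 \<le> (\<Sum>b<k. if \<tau> < block_mean m W z b then 1 else 0 :: real)}"
    unfolding mom_test_def by (subst integral_if_one_zero[symmetric]) (auto intro!: Bochner_Integration.integral_cong)
  also have "\<dots> \<le> measure ?N {z \<in> space ?N.
      k / 2 \<le> (\<Sum>b<k. if t \<le> \<bar>block_mean m W z b - (\<integral>x. W x \<partial>P)\<bar> then 1 else 0 :: real)}"
  proof (rule N.finite_measure_mono[OF subsetI])
    fix z assume "z \<in> {z \<in> space ?N. \<not> k / 2 \<le> (\<Sum>b<k. if \<tau> < block_mean m W z b then 1 else 0 :: real)}"
    moreover have "(\<Sum>b<k. if \<tau> < block_mean m W z b then 1 else 0 :: real)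
        + (\<Sum>b<k. if \<tau> < block_mean m W z b then 0 else 1) = k"
      by (simp add: sum.distrib[symmetric] if_distrib cong: if_cong)
    moreover have "(\<Sum>b<k. if \<tau> < block_mean m W z b then 0 else 1 :: real)
        \<le> (\<Sum>b<k. if t \<le> \<bar>block_mean m W z b - (\<integral>x. W x \<partial>P)\<bar> then 1 else 0)"
      using assms by (intro sum_mono) auto
    ultimately show "z \<in> {z \<in> space ?N.
        k / 2 \<le> (\<Sum>b<k. if t \<le> \<bar>block_mean m W z b - (\<integral>x. W x \<partial>P)\<bar> then 1 else 0 :: real)}"
      by auto
  qed measurable
  also have "\<dots> \<le> exp (- real k / 8)"
    by (rule prob_half_block_means_deviate_le[OF P W m t blocks var])
  finally show ?thesis .
qed

end

text \<open>The block size is the least \<open>m\<close> with \<open>4 V D \<le> m (3 D / 8)\<^sup>2\<close>, i.e. Chebyshev's bound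
  at threshold \<open>3 D / 8\<close> is at most \<open>1/4\<close> when the second moment is at most \<open>V D\<close>.\<close>

definition mom_block_size :: "real \<Rightarrow> real \<Rightarrow> nat" where
  "mom_block_size V D = nat \<lceil>256 * V / (9 * D)\<rceil>"

lemma mom_block_size:
  fixes V D :: real
  assumes "V > 0" "D > 0"
  shows "mom_block_size V D > 0" and "4 * V * D \<le> mom_block_size V D * (3 * D / 8)\<^sup>2"
    and "mom_block_size V D * D \<le> 256 * V / 9 + D"
proof -
  let ?x = "256 * V / (9 * D)"
  have x: "?x > 0" using assms by simp
  have ge: "?x \<le> mom_block_size V D" unfolding mom_block_size_def by (rule real_nat_ceiling_ge)
  then show "mom_block_size V D > 0" using x by linarith
  have "4 * V * D = ?x * (3 * D / 8)\<^sup>2" using assms by (simp add: power2_eq_square field_simps)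
  also have "\<dots> \<le> mom_block_size V D * (3 * D / 8)\<^sup>2" using ge by (intro mult_right_mono) auto
  finally show "4 * V * D \<le> mom_block_size V D * (3 * D / 8)\<^sup>2" .
  have "real (mom_block_size V D) \<le> ?x + 1"
    using x of_int_ceiling_le_add_one[of ?x] by (simp add: mom_block_size_def)
  then have "mom_block_size V D * D \<le> (?x + 1) * D" using assms by (intro mult_right_mono) auto
  also have "\<dots> = 256 * V / 9 + D" using assms by (simp add: field_simps)
  finally show "mom_block_size V D * D \<le> 256 * V / 9 + D" .
qed

text \<open>The threshold \<open>3 D / 8\<close> lies midway between the means \<open>0\<close> and \<open>3 D / 4\<close> that the statistic
  has under the null and under the alternatives; samples too small for two blocks get the trivial
  test \<open>1/2\<close>.\<close>

definition mean_gap_test :: "real \<Rightarrow> real \<Rightarrow> nat \<Rightarrow> ('b \<Rightarrow> real) \<Rightarrow> (nat \<Rightarrow> 'b) \<Rightarrow> real" where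
  "mean_gap_test V D n W = (if D > 0 \<and> 2 * mom_block_size V D \<le> n
     then mom_test (n div mom_block_size V D) (mom_block_size V D) (3 * D / 8) W else (\<lambda>_. 1 / 2))"

lemma measurable_mean_gap_test:
  "W \<in> borel_measurable S \<Longrightarrow> mean_gap_test V D n W \<in> borel_measurable (PiM {..<n} (\<lambda>_. S))"
  unfolding mean_gap_test_def by (auto intro: measurable_mom_test)

lemma mean_gap_test_range: "0 \<le> mean_gap_test V D n W z \<and> mean_gap_test V D n W z \<le> 1"
  by (simp add: mean_gap_test_def mom_test_def)

context
  fixes V D Dmax C :: real and n :: nat
  assumes V: "V > 0" and D: "0 \<le> D" "D \<le> Dmax"
  defines "C \<equiv> 1 / (16 * (256 * V / 9 + Dmax))"
begin

lemma small_sample_rate: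
  assumes "D = 0 \<or> n < 2 * mom_block_size V D"
  shows "1 / 2 \<le> exp (- C * n * D)"
proof -
  have A: "256 * V / 9 + Dmax > 0" using V D by linarith
  have "C * n * D < 1 / 8"
  proof (cases "D = 0")
    case False
    then have "D > 0" using D by simp
    have "real n * D < 2 * mom_block_size V D * D"
      using assms \<open>D > 0\<close> False by (intro mult_strict_right_mono) auto
    also have "\<dots> \<le> 2 * (256 * V / 9 + Dmax)"
      using mom_block_size(3)[OF V \<open>D > 0\<close>] D by simp
    finally show ?thesis using A by (simp add: C_def field_simps)
  qed simp
  then have "1 / 2 \<le> 1 + (- C * n * D)" by linarith
  also have "\<dots> \<le> exp (- C * n * D)" by (rule exp_ge_add_one_self)
  finally show ?thesis .
qed

lemma large_sample_rate:
  assumes "D > 0" and "2 * mom_block_size V D \<le> n"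
  shows "exp (- real (n div mom_block_size V D) / 8) \<le> exp (- C * n * D)"
proof -
  define m where "m = mom_block_size V D"
  define k where "k = n div m"
  have m: "real m > 0" using mom_block_size(1)[OF V assms(1)] by (simp add: m_def)
  have "n < (k + 1) * m" unfolding k_def using m
    by (metis add.commute div_mult_mod_eq mod_less_divisor mult.commute mult_Suc_right
        nat_add_left_cancel_less Suc_eq_plus1 of_nat_0_less_iff)
  then have "real n < (real k + 1) * m" by (metis of_nat_1 of_nat_add of_nat_less_iff of_nat_mult)
  moreover have "2 * real m \<le> real n" using assms(2) by (simp add: m_def)
  ultimately have k: "real n / (2 * m) \<le> k" using m by (simp add: field_simps)
  have "m * D \<le> 256 * V / 9 + Dmax" using mom_block_size(3)[OF V assms(1)] D by (simp add: m_def)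
  then have "real n * D / (16 * (256 * V / 9 + Dmax)) \<le> real n * D / (16 * (m * D))"
    using assms(1) m V D by (intro divide_left_mono) (auto intro!: mult_pos_pos)
  then have "C * n * D \<le> real n * D / (16 * (m * D))"
    by (simp add: C_def)
  also have "\<dots> = real n / (2 * m) / 8" using assms(1) by (simp add: field_simps)
  also have "\<dots> \<le> k / 8" using k by simp
  finally show ?thesis by (simp add: k_def m_def)
qed

lemma integral_mean_gap_test_le:
  assumes "prob_space P" "W \<in> borel_measurable P" "integrable P (\<lambda>z. (W z)\<^sup>2)"
    and "(\<integral>z. W z \<partial>P) \<le> 0" "(\<integral>z. (W z)\<^sup>2 \<partial>P) \<le> V * D"
  shows "(\<integral>z. mean_gap_test V D n W z \<partial>PiM {..<n} (\<lambda>_. P)) \<le> exp (- C * n * D)"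
proof (cases "D > 0 \<and> 2 * mom_block_size V D \<le> n")
  case True
  note block_size = mom_block_size[OF V, of D]
  have var: "(\<integral>x. (W x - (\<integral>x. W x \<partial>P))\<^sup>2 \<partial>P) \<le> mom_block_size V D * (3 * D / 8)\<^sup>2 / 4"
    using prob_space.variance_le_second_moment[OF assms(1-3)] assms(5) block_size(2) True by simp
  have "(\<integral>z. mom_test (n div mom_block_size V D) (mom_block_size V D) (3 * D / 8) W z \<partial>PiM {..<n} (\<lambda>_. P))
      \<le> exp (- real (n div mom_block_size V D) / 8)"
    using True block_size assms var by (intro integral_mom_test_le[where t = "3 * D / 8"]) auto
  also have "\<dots> \<le> exp (- C * n * D)"
    using True by (intro large_sample_rate) auto
  finally show ?thesis
    using True by (simp add: mean_gap_test_def)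
next
  case False
  then have "mean_gap_test V D n W = (\<lambda>_. 1 / 2)" unfolding mean_gap_test_def by auto
  moreover have "1 / 2 \<le> exp (- C * n * D)"
    using False D by (intro small_sample_rate) auto
  ultimately show ?thesis
    using assms(1) by (simp add: prob_space.prob_space[OF prob_space_PiM])
qed

lemma integral_one_minus_mean_gap_test_le:
  assumes "prob_space P" "W \<in> borel_measurable P" "integrable P (\<lambda>z. (W z)\<^sup>2)"
    and "3 * D / 4 \<le> (\<integral>z. W z \<partial>P)" "(\<integral>z. (W z)\<^sup>2 \<partial>P) \<le> V * D"
  shows "(\<integral>z. 1 - mean_gap_test V D n W z \<partial>PiM {..<n} (\<lambda>_. P)) \<le> exp (- C * n * D)"
proof (cases "D > 0 \<and> 2 * mom_block_size V D \<le> n")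
  case True
  note block_size = mom_block_size[OF V, of D]
  have var: "(\<integral>x. (W x - (\<integral>x. W x \<partial>P))\<^sup>2 \<partial>P) \<le> mom_block_size V D * (3 * D / 8)\<^sup>2 / 4"
    using prob_space.variance_le_second_moment[OF assms(1-3)] assms(5) block_size(2) True by simp
  have "(\<integral>z. 1 - mom_test (n div mom_block_size V D) (mom_block_size V D) (3 * D / 8) W z \<partial>PiM {..<n} (\<lambda>_. P))
      \<le> exp (- real (n div mom_block_size V D) / 8)"
    using True block_size assms var by (intro integral_one_minus_mom_test_le[where t = "3 * D / 8"]) auto
  also have "\<dots> \<le> exp (- C * n * D)"
    using True by (intro large_sample_rate) auto
  finally show ?thesis
    using True by (simp add: mean_gap_test_def)
next
  case False
  then have "mean_gap_test V D n W = (\<lambda>_. 1 / 2)" unfolding mean_gap_test_def by auto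
  moreover have "1 / 2 \<le> exp (- C * n * D)"
    using False D by (intro small_sample_rate) auto
  ultimately show ?thesis
    using assms(1) by (simp add: prob_space.prob_space[OF prob_space_PiM])
qed

end

section \<open>The Gaussian regression model\<close>

lemma normal_density_shifted_moments:
  fixes c a \<sigma> :: real
  assumes \<sigma>: "\<sigma> > 0"
  shows "integrable lborel (\<lambda>y. normal_density c \<sigma> y * (y - a))"
    and "(\<integral>y. normal_density c \<sigma> y * (y - a) \<partial>lborel) = c - a"
    and "integrable lborel (\<lambda>y. normal_density c \<sigma> y * (y - a)\<^sup>2)"
    and "(\<integral>y. normal_density c \<sigma> y * (y - a)\<^sup>2 \<partial>lborel) = (c - a)\<^sup>2 + \<sigma>\<^sup>2"
proof -
  have i0: "integrable lborel (normal_density c \<sigma>)" using \<sigma> by simp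
  have i1: "integrable lborel (\<lambda>y. normal_density c \<sigma> y * (y - c) ^ 1)"
    and i2: "integrable lborel (\<lambda>y. normal_density c \<sigma> y * (y - c) ^ 2)"
    by (rule integrable_normal_moment[OF \<sigma>])+
  have m1: "(\<integral>y. normal_density c \<sigma> y * (y - c) ^ 1 \<partial>lborel) = 0"
    using integral_normal_moment_odd[OF \<sigma>, of c 0] by simp
  have m2: "(\<integral>y. normal_density c \<sigma> y * (y - c) ^ 2 \<partial>lborel) = \<sigma>\<^sup>2"
    using integral_normal_moment_even[OF \<sigma>, of c 1] \<sigma> by simp
  have e1: "normal_density c \<sigma> y * (y - a) = normal_density c \<sigma> y * (y - c) ^ 1 + (c - a) * normal_density c \<sigma> y" for y
    by (simp add: algebra_simps)
  have e2: "normal_density c \<sigma> y * (y - a)\<^sup>2 = normal_density c \<sigma> y * (y - c) ^ 2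
      + 2 * (c - a) * (normal_density c \<sigma> y * (y - c) ^ 1) + (c - a)\<^sup>2 * normal_density c \<sigma> y" for y
    by (simp add: power2_eq_square algebra_simps)
  show "integrable lborel (\<lambda>y. normal_density c \<sigma> y * (y - a))"
    unfolding e1 using i0 i1 by simp
  show "(\<integral>y. normal_density c \<sigma> y * (y - a) \<partial>lborel) = c - a"
    unfolding e1 using i0 i1 m1 \<sigma> by simp
  show "integrable lborel (\<lambda>y. normal_density c \<sigma> y * (y - a)\<^sup>2)"
    unfolding e2 using i0 i1 i2 by simp
  show "(\<integral>y. normal_density c \<sigma> y * (y - a)\<^sup>2 \<partial>lborel) = (c - a)\<^sup>2 + \<sigma>\<^sup>2"
    unfolding e2 using i0 i1 i2 m1 m2 \<sigma> by simp
qed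

lemma regr_law_eq_density:
  "regr_law Q g \<sigma> = density (Q \<Otimes>\<^sub>M lborel) (\<lambda>z. ennreal (normal_density (g (fst z)) \<sigma> (snd z)))"
  unfolding regr_law_def by (intro arg_cong[where f = "density _"]) (auto simp: fun_eq_iff)

lemma sets_regr_law[simp, measurable_cong]: "sets (regr_law Q g \<sigma>) = sets (Q \<Otimes>\<^sub>M lborel)"
  by (simp add: regr_law_eq_density)

context
  fixes Q :: "'a measure" and g :: "'a \<Rightarrow> real" and \<sigma> :: real
  assumes Q: "prob_space Q" and g[measurable]: "g \<in> borel_measurable Q" and \<sigma>: "\<sigma> > 0"
begin

interpretation Q: prob_space Q by (rule Q)
interpretation QL: pair_sigma_finite Q lborel by unfold_locales

lemma measurable_regr_density[measurable]:
  "(\<lambda>z. normal_density (g (fst z)) \<sigma> (snd z)) \<in> borel_measurable (Q \<Otimes>\<^sub>M lborel)"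
  unfolding normal_density_def by measurable

lemma nn_integral_regr_law:
  fixes F :: "'a \<times> real \<Rightarrow> ennreal"
  assumes [measurable]: "F \<in> borel_measurable (Q \<Otimes>\<^sub>M lborel)"
  shows "(\<integral>\<^sup>+z. F z \<partial>regr_law Q g \<sigma>) = (\<integral>\<^sup>+x. \<integral>\<^sup>+y. ennreal (normal_density (g x) \<sigma> y) * F (x, y) \<partial>lborel \<partial>Q)"
proof -
  have "(\<integral>\<^sup>+z. F z \<partial>regr_law Q g \<sigma>)
      = (\<integral>\<^sup>+z. ennreal (normal_density (g (fst z)) \<sigma> (snd z)) * F z \<partial>(Q \<Otimes>\<^sub>M lborel))"
    unfolding regr_law_eq_density by (rule nn_integral_density) measurable
  also have "\<dots> = (\<integral>\<^sup>+x. \<integral>\<^sup>+y. ennreal (normal_density (g x) \<sigma> y) * F (x, y) \<partial>lborel \<partial>Q)"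
    by (rule lborel.nn_integral_fst[symmetric,
          where f = "\<lambda>z. ennreal (normal_density (g (fst z)) \<sigma> (snd z)) * F z", simplified]) measurable
  finally show ?thesis .
qed

lemma prob_space_regr_law: "prob_space (regr_law Q g \<sigma>)"
proof (rule prob_spaceI)
  have "emeasure (regr_law Q g \<sigma>) (space (regr_law Q g \<sigma>)) = (\<integral>\<^sup>+z. 1 \<partial>regr_law Q g \<sigma>)"
    by simp
  also have "\<dots> = (\<integral>\<^sup>+x. \<integral>\<^sup>+y. ennreal (normal_density (g x) \<sigma> y) \<partial>lborel \<partial>Q)"
    by (subst nn_integral_regr_law) auto
  also have "\<dots> = (\<integral>\<^sup>+x. 1 \<partial>Q)"
    using \<sigma> by (intro nn_integral_cong) (simp add: nn_integral_eq_integral)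
  also have "\<dots> = 1" using Q.emeasure_space_1 by simp
  finally show "emeasure (regr_law Q g \<sigma>) (space (regr_law Q g \<sigma>)) = 1" .
qed

lemma integral_regr_law:
  fixes F :: "'a \<times> real \<Rightarrow> real"
  assumes [measurable]: "F \<in> borel_measurable (Q \<Otimes>\<^sub>M lborel)" and "integrable (regr_law Q g \<sigma>) F"
  shows "(\<integral>z. F z \<partial>regr_law Q g \<sigma>) = (\<integral>x. \<integral>y. normal_density (g x) \<sigma> y * F (x, y) \<partial>lborel \<partial>Q)"
proof -
  have "integrable (Q \<Otimes>\<^sub>M lborel) (\<lambda>z. normal_density (g (fst z)) \<sigma> (snd z) *\<^sub>R F z)"
    using assms(2) unfolding regr_law_eq_density by (subst (asm) integrable_density) auto
  moreover have "(\<integral>z. F z \<partial>regr_law Q g \<sigma>)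
      = (\<integral>z. normal_density (g (fst z)) \<sigma> (snd z) *\<^sub>R F z \<partial>(Q \<Otimes>\<^sub>M lborel))"
    unfolding regr_law_eq_density by (rule integral_density) auto
  ultimately show ?thesis using QL.integral_fst'[of "\<lambda>z. normal_density (g (fst z)) \<sigma> (snd z) *\<^sub>R F z"] by simp
qed

lemma regr_law_linear_statistic:
  fixes h a :: "'a \<Rightarrow> real"
  assumes [measurable]: "h \<in> borel_measurable Q" "a \<in> borel_measurable Q"
    and int: "integrable Q (\<lambda>x. (h x)\<^sup>2 * ((g x - a x)\<^sup>2 + \<sigma>\<^sup>2))"
  defines "W \<equiv> \<lambda>z. h (fst z) * (snd z - a (fst z))"
  shows "integrable (regr_law Q g \<sigma>) (\<lambda>z. (W z)\<^sup>2)"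
    and "(\<integral>z. (W z)\<^sup>2 \<partial>regr_law Q g \<sigma>) = (\<integral>x. (h x)\<^sup>2 * ((g x - a x)\<^sup>2 + \<sigma>\<^sup>2) \<partial>Q)"
    and "(\<integral>z. W z \<partial>regr_law Q g \<sigma>) = (\<integral>x. h x * (g x - a x) \<partial>Q)"
proof -
  interpret R: prob_space "regr_law Q g \<sigma>" by (rule prob_space_regr_law)
  have W[measurable]: "W \<in> borel_measurable (Q \<Otimes>\<^sub>M lborel)" unfolding W_def by measurable
  have W_sq: "normal_density (g x) \<sigma> y * (W (x, y))\<^sup>2 = (h x)\<^sup>2 * (normal_density (g x) \<sigma> y * (y - a x)\<^sup>2)"
    for x y by (simp add: W_def power_mult_distrib mult_ac)
  have inner: "(\<integral>y. normal_density (g x) \<sigma> y * (W (x, y))\<^sup>2 \<partial>lborel) = (h x)\<^sup>2 * ((g x - a x)\<^sup>2 + \<sigma>\<^sup>2)"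
    for x using normal_density_shifted_moments(4)[OF \<sigma>] by (simp add: W_sq)
  have inner_nn: "(\<integral>\<^sup>+y. normal_density (g x) \<sigma> y * (W (x, y))\<^sup>2 \<partial>lborel) = (h x)\<^sup>2 * ((g x - a x)\<^sup>2 + \<sigma>\<^sup>2)"
    for x
  proof -
    have "integrable lborel (\<lambda>y. normal_density (g x) \<sigma> y * (W (x, y))\<^sup>2)"
      using normal_density_shifted_moments(3)[OF \<sigma>, of "g x" "a x"] by (simp add: W_sq)
    then show ?thesis by (simp add: nn_integral_eq_integral inner)
  qed
  have "(\<integral>\<^sup>+z. (W z)\<^sup>2 \<partial>regr_law Q g \<sigma>) = (\<integral>\<^sup>+x. (h x)\<^sup>2 * ((g x - a x)\<^sup>2 + \<sigma>\<^sup>2) \<partial>Q)"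
    by (subst nn_integral_regr_law) (auto simp: ennreal_mult'[symmetric] inner_nn intro!: nn_integral_cong)
  also have "\<dots> < \<infinity>"
    using int by (simp add: nn_integral_eq_integral)
  finally show W2: "integrable (regr_law Q g \<sigma>) (\<lambda>z. (W z)\<^sup>2)"
    by (intro integrableI_nonneg) auto
  show "(\<integral>z. (W z)\<^sup>2 \<partial>regr_law Q g \<sigma>) = (\<integral>x. (h x)\<^sup>2 * ((g x - a x)\<^sup>2 + \<sigma>\<^sup>2) \<partial>Q)"
    by (simp add: integral_regr_law[OF _ W2] inner)
  have "integrable (regr_law Q g \<sigma>) W"
    by (rule R.square_integrable_imp_integrable[OF _ W2]) measurable
  moreover have "(\<integral>y. normal_density (g x) \<sigma> y * W (x, y) \<partial>lborel) = h x * (g x - a x)" for x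
    using normal_density_shifted_moments(2)[OF \<sigma>] by (simp add: W_def mult.left_commute)
  ultimately show "(\<integral>z. W z \<partial>regr_law Q g \<sigma>) = (\<integral>x. h x * (g x - a x) \<partial>Q)"
    by (simp add: integral_regr_law[OF W])
qed

end

section \<open>Gram--Schmidt orthogonalisation in \<open>L\<^sub>2\<close>\<close>

lemma integrable_bounded_mult:
  fixes f H :: "'a \<Rightarrow> real"
  assumes "f \<in> borel_measurable Q" "\<And>x. x \<in> space Q \<Longrightarrow> \<bar>f x\<bar> \<le> B" "integrable Q H"
  shows "integrable Q (\<lambda>x. f x * H x)"
proof (rule Bochner_Integration.integrable_bound)
  show "integrable Q (\<lambda>x. B * \<bar>H x\<bar>)" using assms(3) by auto
  show "(\<lambda>x. f x * H x) \<in> borel_measurable Q"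
    using assms(1) borel_measurable_integrable[OF assms(3)] by measurable
  show "AE x in Q. norm (f x * H x) \<le> norm (B * \<bar>H x\<bar>)"
  proof (intro AE_I2)
    fix x assume "x \<in> space Q"
    then have "\<bar>f x\<bar> \<le> \<bar>B\<bar>" using assms(2) by force
    then show "norm (f x * H x) \<le> norm (B * \<bar>H x\<bar>)" by (simp add: abs_mult mult_right_mono)
  qed
qed

text \<open>A vector of norm zero gets the coefficient
  \<open>0\<close> (division by zero), which is harmless since it vanishes \<open>Q\<close>-almost everywhere.\<close>

function gram_schmidt :: "'a measure \<Rightarrow> (nat \<Rightarrow> 'a \<Rightarrow> real) \<Rightarrow> nat \<Rightarrow> 'a \<Rightarrow> real" where
  "gram_schmidt Q F k x = F k x - (\<Sum>i<k.
     ((\<integral>y. F k y * gram_schmidt Q F i y \<partial>Q) / (\<integral>y. (gram_schmidt Q F i y)\<^sup>2 \<partial>Q)) * gram_schmidt Q F i x)"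
  by auto
termination by (relation "Wellfounded.measure (\<lambda>(Q, F, k, x). k)") auto

declare gram_schmidt.simps[simp del]

context
  fixes Q :: "'a measure" and F :: "nat \<Rightarrow> 'a \<Rightarrow> real"
  assumes Q: "prob_space Q" and F_meas: "\<And>j. F j \<in> borel_measurable Q"
    and F_bounded: "\<And>j. \<exists>B. \<forall>x\<in>space Q. \<bar>F j x\<bar> \<le> B"
begin

interpretation Q: prob_space Q by (rule Q)

abbreviation "gs \<equiv> gram_schmidt Q F"

abbreviation gs_coeff :: "nat \<Rightarrow> nat \<Rightarrow> real" where
  "gs_coeff k i \<equiv> (\<integral>y. F k y * gs i y \<partial>Q) / (\<integral>y. (gs i y)\<^sup>2 \<partial>Q)"

lemma gram_schmidt_eq: "gs k x = F k x - (\<Sum>i<k. gs_coeff k i * gs i x)"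
  by (subst gram_schmidt.simps) simp

lemma gram_schmidt_measurable_bounded:
  "gs k \<in> borel_measurable Q \<and> (\<exists>B. \<forall>x\<in>space Q. \<bar>gs k x\<bar> \<le> B)"
proof (induction k rule: less_induct)
  case (less k)
  then have "\<forall>i\<in>{..<k}. \<exists>B. \<forall>x\<in>space Q. \<bar>gs i x\<bar> \<le> B" by blast
  then obtain B where B: "\<And>i x. i < k \<Longrightarrow> x \<in> space Q \<Longrightarrow> \<bar>gs i x\<bar> \<le> B i"
    by (metis lessThan_iff)
  obtain BF where BF: "\<And>x. x \<in> space Q \<Longrightarrow> \<bar>F k x\<bar> \<le> BF" using F_bounded by blast
  have gs_k: "gs k = (\<lambda>x. F k x - (\<Sum>i<k. gs_coeff k i * gs i x))"
    by (intro ext gram_schmidt_eq)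
  have "gs k \<in> borel_measurable Q"
    unfolding gs_k using less F_meas
    by (intro borel_measurable_diff borel_measurable_sum borel_measurable_times) auto
  moreover have "\<bar>gs k x\<bar> \<le> BF + (\<Sum>i<k. \<bar>gs_coeff k i\<bar> * B i)" if x: "x \<in> space Q" for x
  proof -
    have "\<bar>gs k x\<bar> \<le> \<bar>F k x\<bar> + (\<Sum>i<k. \<bar>gs_coeff k i * gs i x\<bar>)"
      unfolding gram_schmidt_eq[of k x] by (intro order_trans[OF abs_triangle_ineq4] add_left_mono sum_abs)
    also have "\<dots> \<le> BF + (\<Sum>i<k. \<bar>gs_coeff k i\<bar> * B i)"
      using BF[OF x] B[OF _ x] unfolding abs_mult
      by (intro add_mono sum_mono mult_left_mono) auto
    finally show ?thesis .
  qed
  ultimately show ?case by blast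
qed

lemma gram_schmidt_measurable[measurable]: "gs k \<in> borel_measurable Q"
  using gram_schmidt_measurable_bounded by blast

lemma integrable_gram_schmidt_mult:
  assumes "integrable Q H"
  shows "integrable Q (\<lambda>x. gs i x * H x)" and "integrable Q (\<lambda>x. F i x * H x)"
  using gram_schmidt_measurable_bounded[of i] F_bounded[of i] F_meas[of i]
  by (auto intro: integrable_bounded_mult[OF _ _ assms])

lemma integrable_gram_schmidt_prod:
  assumes "integrable Q H"
  shows "integrable Q (\<lambda>x. gs i x * gs j x * H x)"
proof -
  obtain B1 B2 where "\<forall>x\<in>space Q. \<bar>gs i x\<bar> \<le> B1" "\<forall>x\<in>space Q. \<bar>gs j x\<bar> \<le> B2"
    using gram_schmidt_measurable_bounded by blast
  then have "\<bar>gs i x * gs j x\<bar> \<le> B1 * B2" if "x \<in> space Q" for x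
    using that by (auto simp: abs_mult intro!: mult_mono order_trans[OF abs_ge_zero])
  then show ?thesis by (intro integrable_bounded_mult[OF _ _ assms]) auto
qed

lemma integrable_gram_schmidt:
  "integrable Q (\<lambda>x. gs i x * gs j x)" "integrable Q (\<lambda>x. F k x * gs j x)"
  using integrable_gram_schmidt_prod[of "\<lambda>_. 1" i j] integrable_gram_schmidt_mult(2)[of "gs j" k]
    integrable_gram_schmidt_mult(1)[of "\<lambda>_. 1" j] by simp_all

lemma AE_gram_schmidt_eq_0:
  assumes "(\<integral>y. (gs j y)\<^sup>2 \<partial>Q) = 0"
  shows "AE x in Q. gs j x = 0"
proof -
  have "integrable Q (\<lambda>x. (gs j x)\<^sup>2)"
    using integrable_gram_schmidt(1)[of j j] by (simp add: power2_eq_square)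
  then have "AE x in Q. (gs j x)\<^sup>2 = 0"
    using assms integral_nonneg_eq_0_iff_AE[of Q "\<lambda>x. (gs j x)\<^sup>2"] by auto
  then show ?thesis by auto
qed

lemma integral_gram_schmidt_orthogonal:
  "j < k \<Longrightarrow> (\<integral>y. gs k y * gs j y \<partial>Q) = 0"
proof (induction k arbitrary: j rule: less_induct)
  case (less k)
  show ?case
  proof (cases "(\<integral>y. (gs j y)\<^sup>2 \<partial>Q) = 0")
    case True
    have "AE x in Q. gs k x * gs j x = 0"
      using AE_gram_schmidt_eq_0[OF True] by eventually_elim simp
    then show ?thesis by (rule integral_eq_zero_AE)
  next
    case False
    have orth: "(\<integral>y. gs i y * gs j y \<partial>Q) = 0" if "i < k" "i \<noteq> j" for i
      using less.IH[of i j] less.IH[of j i] that less.prems by (cases "i < j") (auto simp: mult.commute)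
    have "(\<integral>y. gs k y * gs j y \<partial>Q)
        = (\<integral>y. F k y * gs j y - (\<Sum>i<k. gs_coeff k i * (gs i y * gs j y)) \<partial>Q)"
      by (intro Bochner_Integration.integral_cong refl)
        (simp add: gram_schmidt_eq[of k] left_diff_distrib sum_distrib_right mult.assoc)
    also have "\<dots> = (\<integral>y. F k y * gs j y \<partial>Q) - (\<Sum>i<k. gs_coeff k i * (\<integral>y. gs i y * gs j y \<partial>Q))"
      using integrable_gram_schmidt by simp
    also have "(\<Sum>i<k. gs_coeff k i * (\<integral>y. gs i y * gs j y \<partial>Q))
        = gs_coeff k j * (\<integral>y. gs j y * gs j y \<partial>Q)"
      using less.prems orth by (intro sum.mono_neutral_right[where S = "{j}", simplified]) auto
    also have "\<dots> = (\<integral>y. F k y * gs j y \<partial>Q)"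
      using False by (simp add: power2_eq_square)
    finally show ?thesis by simp
  qed
qed

lemma integral_gram_schmidt_mult:
  "(\<integral>y. gs i y * gs j y \<partial>Q) = (if i = j then \<integral>y. (gs i y)\<^sup>2 \<partial>Q else 0)"
  using integral_gram_schmidt_orthogonal[of i j] integral_gram_schmidt_orthogonal[of j i]
  by (cases i j rule: linorder_cases) (auto simp: power2_eq_square mult.commute)

lemma span_gram_schmidt:
  "\<exists>b. \<forall>x. (\<Sum>j<M. c j * F j x) = (\<Sum>i<M. b i * gs i x)"
proof -
  define \<beta> where "\<beta> k i = (if i = k then 1 else if i < k then gs_coeff k i else 0)" for k i
  have F: "F k x = (\<Sum>i<M. \<beta> k i * gs i x)" if "k < M" for k x
  proof -
    have "(\<Sum>i<M. \<beta> k i * gs i x) = (\<Sum>i<k. \<beta> k i * gs i x) + (\<Sum>i\<in>{k..<M}. \<beta> k i * gs i x)"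
      using that by (subst sum.union_disjoint[symmetric]) (auto intro!: sum.cong)
    also have "(\<Sum>i\<in>{k..<M}. \<beta> k i * gs i x) = gs k x"
      using that by (subst sum.mono_neutral_right[where S = "{k}"]) (auto simp: \<beta>_def)
    finally show ?thesis by (simp add: \<beta>_def gram_schmidt_eq[of k x])
  qed
  have "(\<Sum>j<M. c j * F j x) = (\<Sum>i<M. (\<Sum>k<M. c k * \<beta> k i) * gs i x)" for x
  proof -
    have "(\<Sum>j<M. c j * F j x) = (\<Sum>k<M. \<Sum>i<M. c k * \<beta> k i * gs i x)"
      by (simp add: F sum_distrib_left mult.assoc)
    also have "\<dots> = (\<Sum>i<M. (\<Sum>k<M. c k * \<beta> k i) * gs i x)"
      by (subst sum.swap) (simp add: sum_distrib_right)
    finally show ?thesis .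
  qed
  then show ?thesis by (intro exI[of _ "\<lambda>i. \<Sum>k<M. c k * \<beta> k i"]) blast
qed

lemma integral_square_gram_schmidt_sum:
  "(\<integral>x. (\<Sum>i<M. b i * gs i x)\<^sup>2 \<partial>Q) = (\<Sum>i<M. (b i)\<^sup>2 * (\<integral>y. (gs i y)\<^sup>2 \<partial>Q))"
proof -
  have sq: "(\<Sum>i<M. b i * gs i x)\<^sup>2 = (\<Sum>i<M. \<Sum>j<M. b i * b j * (gs i x * gs j x))" for x
    by (simp add: power2_eq_square sum_product mult_ac)
  have "(\<integral>x. (\<Sum>i<M. b i * gs i x)\<^sup>2 \<partial>Q) = (\<Sum>i<M. \<Sum>j<M. b i * b j * (\<integral>x. gs i x * gs j x \<partial>Q))"
    unfolding sq using integrable_gram_schmidt by (simp add: Bochner_Integration.integral_sum)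
  also have "\<dots> = (\<Sum>i<M. (b i)\<^sup>2 * (\<integral>y. (gs i y)\<^sup>2 \<partial>Q))"
    by (simp add: integral_gram_schmidt_mult if_distrib cong: if_cong) (simp add: power2_eq_square)
  finally show ?thesis .
qed

text \<open>Expanding in the orthogonal basis and dropping the null vectors, Cauchy--Schwarz applied to
  the coefficients weighted by the norms of the basis vectors bounds the \<open>L\<^sub>2(H Q)\<close> norm by the
  \<open>L\<^sub>2(Q)\<close> norm.\<close>

lemma weighted_square_integral_gram_schmidt_le:
  assumes H: "\<And>x. x \<in> space Q \<Longrightarrow> 0 \<le> H x" "integrable Q H"
    and n: "\<And>i. n i = (\<integral>y. (gs i y)\<^sup>2 \<partial>Q)" and S: "S = {i. i < M \<and> n i \<noteq> 0}"
  shows "(\<integral>x. (\<Sum>i<M. b i * gs i x)\<^sup>2 * H x \<partial>Q)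
    \<le> (\<Sum>i\<in>S. (\<integral>x. (gs i x)\<^sup>2 * H x \<partial>Q) / n i) * (\<integral>x. (\<Sum>i<M. b i * gs i x)\<^sup>2 \<partial>Q)"
proof -
  have "n i \<ge> 0" for i unfolding n by (intro integral_nonneg_AE) auto
  then have n_pos: "n i > 0" if "i \<in> S" for i
    using that by (simp add: S less_le)
  have null: "AE x in Q. \<forall>i\<in>{..<M} - S. gs i x = 0"
    by (rule AE_finite_allI) (auto simp: S n intro: AE_gram_schmidt_eq_0)
  have "AE x in Q. (\<Sum>i<M. b i * gs i x)\<^sup>2 * H x
      \<le> (\<Sum>i\<in>S. (b i)\<^sup>2 * n i) * (\<Sum>i\<in>S. (gs i x)\<^sup>2 * H x / n i)"
    using null AE_space
  proof eventually_elim
    case (elim x)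
    have "(\<Sum>i<M. b i * gs i x) = (\<Sum>i\<in>S. (b i * sqrt (n i)) * (gs i x / sqrt (n i)))"
      using elim n_pos by (subst sum.mono_neutral_right[of "{..<M}" S]) (auto simp: S)
    then have "(\<Sum>i<M. b i * gs i x)\<^sup>2 \<le> (\<Sum>i\<in>S. (b i * sqrt (n i))\<^sup>2) * (\<Sum>i\<in>S. (gs i x / sqrt (n i))\<^sup>2)"
      by (simp only: Cauchy_Schwarz_ineq_sum)
    also have "\<dots> = (\<Sum>i\<in>S. (b i)\<^sup>2 * n i) * (\<Sum>i\<in>S. (gs i x)\<^sup>2 / n i)"
      using n_pos by (simp add: power_mult_distrib power_divide less_imp_le)
    finally have "(\<Sum>i<M. b i * gs i x)\<^sup>2 * H x
        \<le> (\<Sum>i\<in>S. (b i)\<^sup>2 * n i) * (\<Sum>i\<in>S. (gs i x)\<^sup>2 / n i) * H x"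
      using H(1)[of x] elim by (intro mult_right_mono) auto
    also have "\<dots> = (\<Sum>i\<in>S. (b i)\<^sup>2 * n i) * (\<Sum>i\<in>S. (gs i x)\<^sup>2 * H x / n i)"
      by (simp add: sum_distrib_right mult.assoc)
    finally show ?case .
  qed
  then have "(\<integral>x. (\<Sum>i<M. b i * gs i x)\<^sup>2 * H x \<partial>Q)
      \<le> (\<integral>x. (\<Sum>i\<in>S. (b i)\<^sup>2 * n i) * (\<Sum>i\<in>S. (gs i x)\<^sup>2 * H x / n i) \<partial>Q)"
  proof (rule integral_mono_AE[rotated 2])
    have "(\<Sum>i<M. b i * gs i x)\<^sup>2 * H x = (\<Sum>i<M. \<Sum>j<M. b i * b j * (gs i x * gs j x * H x))" for x
    proof -
      have "(\<Sum>i<M. b i * gs i x)\<^sup>2 = (\<Sum>i<M. \<Sum>j<M. b i * b j * (gs i x * gs j x))"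
        by (simp add: power2_eq_square sum_product mult_ac)
      then show ?thesis by (simp add: sum_distrib_right mult.assoc)
    qed
    then show "integrable Q (\<lambda>x. (\<Sum>i<M. b i * gs i x)\<^sup>2 * H x)"
      using integrable_gram_schmidt_prod[OF H(2)] by simp
    show "integrable Q (\<lambda>x. (\<Sum>i\<in>S. (b i)\<^sup>2 * n i) * (\<Sum>i\<in>S. (gs i x)\<^sup>2 * H x / n i))"
      using integrable_gram_schmidt_prod[OF H(2)] by (simp add: power2_eq_square)
  qed
  also have "\<dots> = (\<Sum>i\<in>S. (b i)\<^sup>2 * n i) * (\<Sum>i\<in>S. (\<integral>x. (gs i x)\<^sup>2 * H x \<partial>Q) / n i)"
    using integrable_gram_schmidt_prod[OF H(2)] by (simp add: Bochner_Integration.integral_sum power2_eq_square)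
  also have "(\<Sum>i\<in>S. (b i)\<^sup>2 * n i) = (\<integral>x. (\<Sum>i<M. b i * gs i x)\<^sup>2 \<partial>Q)"
    unfolding integral_square_gram_schmidt_sum n[symmetric] by (intro sum.mono_neutral_left) (auto simp: S)
  finally show ?thesis by (simp add: mult.commute)
qed

lemma weighted_square_integral_span_le:
  assumes "\<And>x. x \<in> space Q \<Longrightarrow> 0 \<le> H x" "integrable Q H"
  shows "\<exists>K\<ge>0. \<forall>c. (\<integral>x. (\<Sum>j<M. c j * F j x)\<^sup>2 * H x \<partial>Q) \<le> K * (\<integral>x. (\<Sum>j<M. c j * F j x)\<^sup>2 \<partial>Q)"
proof -
  define n where "n i = (\<integral>y. (gs i y)\<^sup>2 \<partial>Q)" for i
  define S where "S = {i. i < M \<and> n i \<noteq> 0}"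
  define K where "K = (\<Sum>i\<in>S. (\<integral>x. (gs i x)\<^sup>2 * H x \<partial>Q) / n i)"
  have "K \<ge> 0"
    unfolding K_def n_def using assms(1)
    by (intro sum_nonneg divide_nonneg_nonneg integral_nonneg_AE) auto
  moreover have "(\<integral>x. (\<Sum>j<M. c j * F j x)\<^sup>2 * H x \<partial>Q) \<le> K * (\<integral>x. (\<Sum>j<M. c j * F j x)\<^sup>2 \<partial>Q)" for c
  proof -
    obtain b where "\<And>x. (\<Sum>j<M. c j * F j x) = (\<Sum>i<M. b i * gs i x)"
      using span_gram_schmidt by blast
    then show ?thesis
      using weighted_square_integral_gram_schmidt_le[OF assms n_def S_def] by (simp add: K_def)
  qed
  ultimately show ?thesis by blast
qed

end

lemma dSigma_eq: "dSigma Q M f l l' = sqrt (\<integral>x. (comb M f l x - comb M f l' x)\<^sup>2 \<partial>Q)"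
  by (simp add: dSigma_def comb_def left_diff_distrib sum_subtractf)

lemma dSigma_nonneg: "0 \<le> dSigma Q M f l l'"
  by (simp add: dSigma_def integral_nonneg_AE)

lemma dSigma_commute: "dSigma Q M f l l' = dSigma Q M f l' l"
  by (simp add: dSigma_eq power2_commute)

definition contrast_statistic ::
  "nat \<Rightarrow> (nat \<Rightarrow> 'a \<Rightarrow> real) \<Rightarrow> (nat \<Rightarrow> real) \<Rightarrow> (nat \<Rightarrow> real) \<Rightarrow> 'a \<times> real \<Rightarrow> real" where
  "contrast_statistic M f lstar l z =
     (comb M f l (fst z) - comb M f lstar (fst z)) * (snd z - comb M f lstar (fst z))"

context
  fixes Q :: "'a measure" and f0 :: "'a \<Rightarrow> real" and \<sigma> \<kappa> :: real
    and M :: nat and f :: "nat \<Rightarrow> 'a \<Rightarrow> real" and lstar :: "nat \<Rightarrow> real"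
  assumes Q: "prob_space Q"
    and f0_meas[measurable]: "f0 \<in> borel_measurable Q"
    and f0_L2: "integrable Q (\<lambda>x. (f0 x)\<^sup>2)"
    and \<sigma>: "\<sigma> > 0"
    and f_meas: "\<And>j. j < M \<Longrightarrow> f j \<in> borel_measurable Q"
    and A3: "\<And>j x. j < M \<Longrightarrow> x \<in> space Q \<Longrightarrow> \<bar>f j x\<bar> \<le> \<kappa>"
    and star: "lstar \<in> Lsimplex M"
    and orth: "\<And>l. l \<in> Lsimplex M \<Longrightarrow>
        (\<integral>x. (comb M f l x - comb M f lstar x) * (comb M f lstar x - f0 x) \<partial>Q) = 0"
begin

interpretation Q: prob_space Q by (rule Q)

lemma measurable_comb[measurable]: "comb M f l \<in> borel_measurable Q"
  unfolding comb_def[abs_def] using f_meas by (intro borel_measurable_sum borel_measurable_times) auto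

lemma measurable_contrast_statistic:
  "contrast_statistic M f lstar l \<in> borel_measurable (Q \<Otimes>\<^sub>M lborel)"
  unfolding contrast_statistic_def[abs_def] by measurable

lemma abs_comb_le: "l \<in> Lsimplex M \<Longrightarrow> x \<in> space Q \<Longrightarrow> \<bar>comb M f l x\<bar> \<le> \<kappa>"
proof -
  assume l: "l \<in> Lsimplex M" and x: "x \<in> space Q"
  have "\<bar>comb M f l x\<bar> \<le> (\<Sum>j<M. l j * \<kappa>)"
    unfolding comb_def using l x A3
    by (intro order_trans[OF sum_abs] sum_mono) (auto simp: Lsimplex_def abs_mult intro!: mult_left_mono)
  also have "\<dots> = \<kappa>" using l by (simp add: Lsimplex_def sum_distrib_right[symmetric])
  finally show ?thesis .
qed

lemma abs_comb_diff_le: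
  "l \<in> Lsimplex M \<Longrightarrow> l' \<in> Lsimplex M \<Longrightarrow> x \<in> space Q \<Longrightarrow> \<bar>comb M f l x - comb M f l' x\<bar> \<le> 2 * \<kappa>"
  using abs_comb_le[of l x] abs_comb_le[of l' x] abs_triangle_ineq4[of "comb M f l x" "comb M f l' x"]
  by linarith

lemma comb_diff_square_le:
  "l \<in> Lsimplex M \<Longrightarrow> l' \<in> Lsimplex M \<Longrightarrow> x \<in> space Q \<Longrightarrow> (comb M f l x - comb M f l' x)\<^sup>2 \<le> 4 * \<kappa>\<^sup>2"
  using abs_le_square_iff[of "comb M f l x - comb M f l' x" "2 * \<kappa>"] abs_comb_diff_le[of l l' x]
  by (simp add: power_mult_distrib)

lemma integrable_comb_diff_square:
  assumes "l \<in> Lsimplex M" "l' \<in> Lsimplex M"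
  shows "integrable Q (\<lambda>x. (comb M f l x - comb M f l' x)\<^sup>2)"
  using comb_diff_square_le[OF assms] by (intro Q.integrable_const_bound[where B = "4 * \<kappa>\<^sup>2"]) auto

lemma integrable_comb_diff_square_mult:
  assumes "l \<in> Lsimplex M" "l' \<in> Lsimplex M" "integrable Q H"
  shows "integrable Q (\<lambda>x. (comb M f l x - comb M f l' x)\<^sup>2 * H x)"
  using comb_diff_square_le[OF assms(1,2)] by (intro integrable_bounded_mult[OF _ _ assms(3)]) auto

lemma dSigma_square:
  "(dSigma Q M f l l')\<^sup>2 = (\<integral>x. (comb M f l x - comb M f l' x)\<^sup>2 \<partial>Q)"
  unfolding dSigma_eq by (simp add: integral_nonneg_AE)

lemma dSigma_square_le: "l \<in> Lsimplex M \<Longrightarrow> l' \<in> Lsimplex M \<Longrightarrow> (dSigma Q M f l l')\<^sup>2 \<le> 4 * \<kappa>\<^sup>2"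
proof -
  assume "l \<in> Lsimplex M" "l' \<in> Lsimplex M"
  then have "(\<integral>x. (comb M f l x - comb M f l' x)\<^sup>2 \<partial>Q) \<le> (\<integral>x. 4 * \<kappa>\<^sup>2 \<partial>Q)"
    using comb_diff_square_le by (intro integral_mono integrable_comb_diff_square) auto
  then show ?thesis by (simp add: dSigma_square Q.prob_space)
qed

lemma integrable_null_weight: "integrable Q (\<lambda>x. (f0 x - comb M f lstar x)\<^sup>2 + \<sigma>\<^sup>2)"
proof -
  have fs_bounded: "\<And>x. x \<in> space Q \<Longrightarrow> \<bar>comb M f lstar x\<bar> \<le> \<kappa>"
    by (rule abs_comb_le[OF star])
  then have "integrable Q (comb M f lstar)"
    by (intro Q.integrable_const_bound[where B = \<kappa>]) auto
  then have "integrable Q (\<lambda>x. comb M f lstar x * comb M f lstar x)"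
    and "integrable Q (\<lambda>x. comb M f lstar x * f0 x)"
    using fs_bounded Q.square_integrable_imp_integrable[OF f0_meas f0_L2]
    by (auto intro: integrable_bounded_mult)
  then have "integrable Q (\<lambda>x. (f0 x)\<^sup>2 + comb M f lstar x * comb M f lstar x
      - 2 * (comb M f lstar x * f0 x) + \<sigma>\<^sup>2)"
    using f0_L2 by simp
  then show ?thesis
    by (rule Bochner_Integration.integrable_cong[THEN iffD1, OF refl, rotated])
      (simp add: power2_eq_square algebra_simps)
qed

lemma exists_null_weight_bound:
  "\<exists>K\<ge>0. \<forall>l2\<in>Lsimplex M.
     (\<integral>x. (comb M f l2 x - comb M f lstar x)\<^sup>2 * ((f0 x - comb M f lstar x)\<^sup>2 + \<sigma>\<^sup>2) \<partial>Q)
       \<le> K * (dSigma Q M f l2 lstar)\<^sup>2"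
proof -
  define F where "F j = (if j < M then f j else (\<lambda>_. 0))" for j
  have F_meas: "\<And>j. F j \<in> borel_measurable Q"
    using f_meas by (simp add: F_def)
  have F_bounded: "\<And>j. \<exists>B. \<forall>x\<in>space Q. \<bar>F j x\<bar> \<le> B"
    using A3 by (auto simp: F_def)
  have "\<exists>K\<ge>0. \<forall>c. (\<integral>x. (\<Sum>j<M. c j * F j x)\<^sup>2 * ((f0 x - comb M f lstar x)\<^sup>2 + \<sigma>\<^sup>2) \<partial>Q)
      \<le> K * (\<integral>x. (\<Sum>j<M. c j * F j x)\<^sup>2 \<partial>Q)"
    by (rule weighted_square_integral_span_le[OF Q]) (use F_meas F_bounded integrable_null_weight in auto)
  then obtain K where K: "K \<ge> 0" "\<And>c. (\<integral>x. (\<Sum>j<M. c j * F j x)\<^sup>2 *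
      ((f0 x - comb M f lstar x)\<^sup>2 + \<sigma>\<^sup>2) \<partial>Q) \<le> K * (\<integral>x. (\<Sum>j<M. c j * F j x)\<^sup>2 \<partial>Q)"
    by blast
  have span: "comb M f l2 x - comb M f lstar x = (\<Sum>j<M. (l2 j - lstar j) * F j x)" for l2 x
    by (simp add: comb_def F_def left_diff_distrib sum_subtractf)
  show ?thesis
    using K(2)[of "\<lambda>j. l2 j - lstar j" for l2] unfolding dSigma_square span
    by (intro exI[of _ K] conjI ballI K(1))
qed

lemma contrast_statistic_null_moments:
  assumes l2: "l2 \<in> Lsimplex M"
  shows "integrable (regr_law Q f0 \<sigma>) (\<lambda>z. (contrast_statistic M f lstar l2 z)\<^sup>2)"
    and "(\<integral>z. contrast_statistic M f lstar l2 z \<partial>regr_law Q f0 \<sigma>) = 0"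
    and "(\<integral>z. (contrast_statistic M f lstar l2 z)\<^sup>2 \<partial>regr_law Q f0 \<sigma>)
      = (\<integral>x. (comb M f l2 x - comb M f lstar x)\<^sup>2 * ((f0 x - comb M f lstar x)\<^sup>2 + \<sigma>\<^sup>2) \<partial>Q)"
proof -
  define g where "g x = comb M f l2 x - comb M f lstar x" for x
  have g_meas: "g \<in> borel_measurable Q"
    unfolding g_def[abs_def] by measurable
  have "integrable Q (\<lambda>x. (g x)\<^sup>2 * ((f0 x - comb M f lstar x)\<^sup>2 + \<sigma>\<^sup>2))"
    unfolding g_def by (rule integrable_comb_diff_square_mult[OF l2 star integrable_null_weight])
  note W = regr_law_linear_statistic[OF Q f0_meas \<sigma> g_meas measurable_comb this]
  have W_eq: "contrast_statistic M f lstar l2 z = g (fst z) * (snd z - comb M f lstar (fst z))" for z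
    by (simp add: contrast_statistic_def g_def)
  show "integrable (regr_law Q f0 \<sigma>) (\<lambda>z. (contrast_statistic M f lstar l2 z)\<^sup>2)"
    unfolding W_eq by (rule W(1))
  show "(\<integral>z. (contrast_statistic M f lstar l2 z)\<^sup>2 \<partial>regr_law Q f0 \<sigma>)
      = (\<integral>x. (comb M f l2 x - comb M f lstar x)\<^sup>2 * ((f0 x - comb M f lstar x)\<^sup>2 + \<sigma>\<^sup>2) \<partial>Q)"
    unfolding W_eq W(2) by (simp add: g_def)
  have "(\<integral>z. contrast_statistic M f lstar l2 z \<partial>regr_law Q f0 \<sigma>)
      = (\<integral>x. - ((comb M f l2 x - comb M f lstar x) * (comb M f lstar x - f0 x)) \<partial>Q)"
    unfolding W_eq W(3) by (intro Bochner_Integration.integral_cong refl) (simp add: g_def algebra_simps)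
  also have "\<dots> = 0" using orth[OF l2] by simp
  finally show "(\<integral>z. contrast_statistic M f lstar l2 z \<partial>regr_law Q f0 \<sigma>) = 0" .
qed

lemma contrast_statistic_alternative_moments:
  assumes l2: "l2 \<in> Lsimplex M" and l: "l \<in> Lsimplex M"
    and near: "dSigma Q M f l l2 < dSigma Q M f lstar l2 / 4"
  shows "integrable (regr_law Q (comb M f l) \<sigma>) (\<lambda>z. (contrast_statistic M f lstar l2 z)\<^sup>2)"
    and "3 * (dSigma Q M f l2 lstar)\<^sup>2 / 4 \<le> (\<integral>z. contrast_statistic M f lstar l2 z \<partial>regr_law Q (comb M f l) \<sigma>)"
    and "(\<integral>z. (contrast_statistic M f lstar l2 z)\<^sup>2 \<partial>regr_law Q (comb M f l) \<sigma>)
      \<le> (4 * \<kappa>\<^sup>2 + \<sigma>\<^sup>2) * (dSigma Q M f l2 lstar)\<^sup>2"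
proof -
  define g where "g x = comb M f l2 x - comb M f lstar x" for x
  define u where "u x = comb M f l2 x - comb M f l x" for x
  define D where "D = (dSigma Q M f l2 lstar)\<^sup>2"
  have D: "D = (\<integral>x. (g x)\<^sup>2 \<partial>Q)" by (simp add: D_def g_def dSigma_square)
  have g_meas: "g \<in> borel_measurable Q" and u_meas: "u \<in> borel_measurable Q"
    unfolding g_def[abs_def] u_def[abs_def] by measurable
  have g_int: "integrable Q (\<lambda>x. (g x)\<^sup>2)" and u_int: "integrable Q (\<lambda>x. (u x)\<^sup>2)"
    unfolding g_def u_def by (intro integrable_comb_diff_square l l2 star)+
  have g2_bound: "\<And>x. x \<in> space Q \<Longrightarrow> (g x)\<^sup>2 \<le> 4 * \<kappa>\<^sup>2"
    and u2_bound: "\<And>x. x \<in> space Q \<Longrightarrow> (u x)\<^sup>2 \<le> 4 * \<kappa>\<^sup>2"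
    and shift_bound: "\<And>x. x \<in> space Q \<Longrightarrow> (comb M f l x - comb M f lstar x)\<^sup>2 \<le> 4 * \<kappa>\<^sup>2"
    unfolding g_def u_def by (intro comb_diff_square_le l l2 star; assumption)+
  have "integrable Q (\<lambda>x. ((comb M f l x - comb M f lstar x)\<^sup>2 + \<sigma>\<^sup>2) * (g x)\<^sup>2)"
    using shift_bound g_int by (intro integrable_bounded_mult[where B = "4 * \<kappa>\<^sup>2 + \<sigma>\<^sup>2"]) auto
  then have gH: "integrable Q (\<lambda>x. (g x)\<^sup>2 * ((comb M f l x - comb M f lstar x)\<^sup>2 + \<sigma>\<^sup>2))"
    by (simp add: mult.commute)
  note W = regr_law_linear_statistic[OF Q measurable_comb \<sigma> g_meas measurable_comb gH]
  have W_eq: "contrast_statistic M f lstar l2 z = g (fst z) * (snd z - comb M f lstar (fst z))" for z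
    by (simp add: contrast_statistic_def g_def)
  show "integrable (regr_law Q (comb M f l) \<sigma>) (\<lambda>z. (contrast_statistic M f lstar l2 z)\<^sup>2)"
    unfolding W_eq by (rule W(1))
  have "(\<integral>z. (contrast_statistic M f lstar l2 z)\<^sup>2 \<partial>regr_law Q (comb M f l) \<sigma>)
      = (\<integral>x. (g x)\<^sup>2 * ((comb M f l x - comb M f lstar x)\<^sup>2 + \<sigma>\<^sup>2) \<partial>Q)"
    unfolding W_eq by (rule W(2))
  also have "\<dots> \<le> (\<integral>x. (4 * \<kappa>\<^sup>2 + \<sigma>\<^sup>2) * (g x)\<^sup>2 \<partial>Q)"
    using gH shift_bound g_int by (intro integral_mono) (auto simp: mult.commute intro!: mult_left_mono)
  also have "\<dots> = (4 * \<kappa>\<^sup>2 + \<sigma>\<^sup>2) * D" by (simp add: D)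
  finally show "(\<integral>z. (contrast_statistic M f lstar l2 z)\<^sup>2 \<partial>regr_law Q (comb M f l) \<sigma>)
      \<le> (4 * \<kappa>\<^sup>2 + \<sigma>\<^sup>2) * (dSigma Q M f l2 lstar)\<^sup>2" by (simp add: D_def)
  have "(\<integral>x. (u x)\<^sup>2 \<partial>Q) = (dSigma Q M f l l2)\<^sup>2"
    by (simp add: u_def dSigma_square power2_commute)
  also have "\<dots> < (dSigma Q M f lstar l2 / 4)\<^sup>2"
    using near dSigma_nonneg by (intro power_strict_mono) auto
  also have "\<dots> = D / 16"
    by (simp add: D_def dSigma_commute[of Q M f lstar] power_divide)
  finally have u_small: "(\<integral>x. (u x)\<^sup>2 \<partial>Q) < D / 16" .
  have am_gm: "g x * u x \<le> (g x)\<^sup>2 / 8 + 2 * (u x)\<^sup>2" for x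
    using zero_le_power2[of "g x - 4 * u x"] by (auto simp: power2_eq_square algebra_simps)
  have gu_int: "integrable Q (\<lambda>x. g x * u x)"
    using abs_comb_diff_le[OF l2 star] Q.square_integrable_imp_integrable[OF u_meas u_int]
    by (intro integrable_bounded_mult[where B = "2 * \<kappa>"] g_meas) (auto simp: g_def)
  have "(\<integral>x. g x * u x \<partial>Q) \<le> (\<integral>x. (g x)\<^sup>2 / 8 + 2 * (u x)\<^sup>2 \<partial>Q)"
    using gu_int g_int u_int am_gm by (intro integral_mono) auto
  also have "\<dots> = D / 8 + 2 * (\<integral>x. (u x)\<^sup>2 \<partial>Q)"
    using g_int u_int by (simp add: D)
  finally have gu_small: "(\<integral>x. g x * u x \<partial>Q) < D / 4" using u_small by linarith
  have "(\<integral>z. contrast_statistic M f lstar l2 z \<partial>regr_law Q (comb M f l) \<sigma>)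
      = (\<integral>x. (g x)\<^sup>2 - g x * u x \<partial>Q)"
    unfolding W_eq W(3)
    by (intro Bochner_Integration.integral_cong refl) (simp add: g_def u_def power2_eq_square algebra_simps)
  also have "\<dots> = D - (\<integral>x. g x * u x \<partial>Q)"
    using g_int gu_int by (simp add: D)
  finally show "3 * (dSigma Q M f l2 lstar)\<^sup>2 / 4 \<le> (\<integral>z. contrast_statistic M f lstar l2 z \<partial>regr_law Q (comb M f l) \<sigma>)"
    using gu_small by (simp add: D_def)
qed

lemma contrast_test_errors:
  fixes n :: nat
  assumes l2: "l2 \<in> Lsimplex M" and V: "4 * \<kappa>\<^sup>2 + \<sigma>\<^sup>2 \<le> V"
    and null_weight: "(\<integral>x. (comb M f l2 x - comb M f lstar x)\<^sup>2 * ((f0 x - comb M f lstar x)\<^sup>2 + \<sigma>\<^sup>2) \<partial>Q)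
      \<le> V * (dSigma Q M f l2 lstar)\<^sup>2"
  defines "C \<equiv> 1 / (16 * (256 * V / 9 + 4 * \<kappa>\<^sup>2))"
  shows "(\<integral>z. mean_gap_test V ((dSigma Q M f l2 lstar)\<^sup>2) n (contrast_statistic M f lstar l2) z
      \<partial>nfold n (regr_law Q f0 \<sigma>)) \<le> exp (- C * n * (dSigma Q M f l2 lstar)\<^sup>2)"
    and "l \<in> Lsimplex M \<Longrightarrow> dSigma Q M f l l2 < dSigma Q M f lstar l2 / 4 \<Longrightarrow>
      (\<integral>z. 1 - mean_gap_test V ((dSigma Q M f l2 lstar)\<^sup>2) n (contrast_statistic M f lstar l2) z
        \<partial>nfold n (regr_law Q (comb M f l) \<sigma>)) \<le> exp (- C * n * (dSigma Q M f l2 lstar)\<^sup>2)"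
proof -
  define D where "D = (dSigma Q M f l2 lstar)\<^sup>2"
  have D: "0 \<le> D" "D \<le> 4 * \<kappa>\<^sup>2"
    using dSigma_square_le[OF l2 star] by (auto simp: D_def)
  have V_pos: "V > 0"
    using V \<sigma> zero_le_power2[of \<kappa>] by (smt (verit) zero_less_power2)
  have W_meas: "contrast_statistic M f lstar l2 \<in> borel_measurable (regr_law Q g \<sigma>)" for g
    using measurable_contrast_statistic by simp
  note null = contrast_statistic_null_moments[OF l2]
  have "(\<integral>z. contrast_statistic M f lstar l2 z \<partial>regr_law Q f0 \<sigma>) \<le> 0"
    using null(2) by simp
  moreover have "(\<integral>z. (contrast_statistic M f lstar l2 z)\<^sup>2 \<partial>regr_law Q f0 \<sigma>) \<le> V * D"
    using null_weight unfolding null(3) D_def .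
  ultimately have "(\<integral>z. mean_gap_test V D n (contrast_statistic M f lstar l2) z \<partial>PiM {..<n} (\<lambda>_. regr_law Q f0 \<sigma>))
      \<le> exp (- C * n * D)"
    unfolding C_def
    by (rule integral_mean_gap_test_le[OF V_pos D prob_space_regr_law[OF Q f0_meas \<sigma>] W_meas null(1)])
  then show "(\<integral>z. mean_gap_test V ((dSigma Q M f l2 lstar)\<^sup>2) n (contrast_statistic M f lstar l2) z
      \<partial>nfold n (regr_law Q f0 \<sigma>)) \<le> exp (- C * n * (dSigma Q M f l2 lstar)\<^sup>2)"
    by (simp add: nfold_def D_def)
  assume "l \<in> Lsimplex M" "dSigma Q M f l l2 < dSigma Q M f lstar l2 / 4"
  note alternative = contrast_statistic_alternative_moments[OF l2 this, folded D_def]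
  have "(4 * \<kappa>\<^sup>2 + \<sigma>\<^sup>2) * D \<le> V * D" using V D by (intro mult_right_mono)
  then have "(\<integral>z. (contrast_statistic M f lstar l2 z)\<^sup>2 \<partial>regr_law Q (comb M f l) \<sigma>) \<le> V * D"
    using alternative(3) by linarith
  then have "(\<integral>z. 1 - mean_gap_test V D n (contrast_statistic M f lstar l2) z
      \<partial>PiM {..<n} (\<lambda>_. regr_law Q (comb M f l) \<sigma>)) \<le> exp (- C * n * D)"
    unfolding C_def
    by (rule integral_one_minus_mean_gap_test_le[OF V_pos D prob_space_regr_law[OF Q measurable_comb \<sigma>]
        W_meas alternative(1,2)])
  then show "(\<integral>z. 1 - mean_gap_test V ((dSigma Q M f l2 lstar)\<^sup>2) n (contrast_statistic M f lstar l2) z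
      \<partial>nfold n (regr_law Q (comb M f l) \<sigma>)) \<le> exp (- C * n * (dSigma Q M f l2 lstar)\<^sup>2)"
    by (simp add: nfold_def D_def)
qed

end

theorem lemma4:
  fixes Q :: "'a measure" and f0 :: "'a \<Rightarrow> real" and \<sigma> \<kappa> :: real
    and M :: nat and f :: "nat \<Rightarrow> 'a \<Rightarrow> real" and lstar :: "nat \<Rightarrow> real"
  assumes Q: "prob_space Q"
    and f0_meas: "f0 \<in> borel_measurable Q"
    and f0_L2: "integrable Q (\<lambda>x. (f0 x)\<^sup>2)"
    and sigma: "\<sigma> > 0"
    and f_meas: "\<And>j. j < M \<Longrightarrow> f j \<in> borel_measurable Q"
    and A3: "\<And>j x. j < M \<Longrightarrow> x \<in> space Q \<Longrightarrow> \<bar>f j x\<bar> \<le> \<kappa>"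
    and star: "lstar \<in> Lsimplex M"
    and orth: "\<And>l. l \<in> Lsimplex M \<Longrightarrow>
        (\<integral>x. (comb M f l x - comb M f lstar x) * (comb M f lstar x - f0 x) \<partial>Q) = 0"
  shows "\<exists>C>0. \<forall>n. \<forall>l2\<in>Lsimplex M. \<exists>\<phi>.
      \<phi> \<in> borel_measurable (nfold n (Q \<Otimes>\<^sub>M lborel)) \<and>
      (\<forall>z\<in>space (nfold n (Q \<Otimes>\<^sub>M lborel)). 0 \<le> \<phi> z \<and> \<phi> z \<le> 1) \<and>
      (\<integral>z. \<phi> z \<partial>nfold n (regr_law Q f0 \<sigma>))
         \<le> exp (- C * real n * (dSigma Q M f l2 lstar)\<^sup>2) \<and>
      (\<forall>l\<in>Lsimplex M. dSigma Q M f l l2 < dSigma Q M f lstar l2 / 4 \<longrightarrow>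
         (\<integral>z. 1 - \<phi> z \<partial>nfold n (regr_law Q (comb M f l) \<sigma>))
           \<le> exp (- C * real n * (dSigma Q M f l2 lstar)\<^sup>2))"
proof -
  note hyps = Q f0_meas f0_L2 sigma f_meas A3 star orth
  obtain K where K: "K \<ge> 0" and null_weight: "\<And>l2. l2 \<in> Lsimplex M \<Longrightarrow>
      (\<integral>x. (comb M f l2 x - comb M f lstar x)\<^sup>2 * ((f0 x - comb M f lstar x)\<^sup>2 + \<sigma>\<^sup>2) \<partial>Q)
        \<le> K * (dSigma Q M f l2 lstar)\<^sup>2"
    using exists_null_weight_bound[OF hyps] by blast
  define V where "V = K + 4 * \<kappa>\<^sup>2 + \<sigma>\<^sup>2"
  define C where "C = 1 / (16 * (256 * V / 9 + 4 * \<kappa>\<^sup>2))"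
  have V_ge_K: "K \<le> V" by (simp add: V_def)
  have V: "4 * \<kappa>\<^sup>2 + \<sigma>\<^sup>2 \<le> V" using K by (simp add: V_def)
  have "(\<integral>x. (comb M f l2 x - comb M f lstar x)\<^sup>2 * ((f0 x - comb M f lstar x)\<^sup>2 + \<sigma>\<^sup>2) \<partial>Q)
      \<le> V * (dSigma Q M f l2 lstar)\<^sup>2" if "l2 \<in> Lsimplex M" for l2
    using null_weight[OF that] mult_right_mono[OF V_ge_K zero_le_power2] by (rule order_trans)
  note errors = contrast_test_errors[OF hyps _ V this, folded C_def]
  have "V > 0" using K sigma by (simp add: V_def add_nonneg_pos)
  then have "0 < 256 * V / 9 + 4 * \<kappa>\<^sup>2" by (simp add: add_pos_nonneg)
  then have "C > 0" by (simp add: C_def)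
  then show ?thesis
    using errors mean_gap_test_range measurable_mean_gap_test[OF measurable_contrast_statistic[OF hyps]]
    unfolding nfold_def by blast
qed

end
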